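(* Let $(\mathcal X_S,\mathcal X_O,\mathcal X_A,\mathfrak p,\mathbf r)$ be a POMDP and $T\in\mathbb Z_+$. For every feasible solution $(\mu,\delta)$ of the MILP (i.e. $(\mu,\delta)\in\mathcal Q^{\mathrm d}(T,\mathcal X_S,\mathcal X_O,\mathcal X_A,\mathfrak p)$) there exist nonnegative variables $(\mu^t_{s'a'soa})$, $t\in\{2,\dots,T\}$, such that the valid inequalities (VI) hold. Moreover, these inequalities are not implied by the linear relaxation: there exist POMDPs and feasible solutions $(\mu,\delta)$ of the linear relaxation of the MILP for which no choice of variables $(\mu^t_{s'a'soa})$ satisfies (VI).
   Context: A POMDP $(\mathcal X_S,\mathcal X_O,\mathcal X_A,\mathfrak p,\mathbf r)$ has finite spaces, initial distribution $p(s)$, emission probabilities $p(o|s)$, transitions $p(s'|s,a)$ and reward $r(s,a,s')$; $T$ is a horizon. A deterministic memoryless policy is $\delta=(\delta^t_{a|o})$ with $\delta^t_{a|o}\in\{0,1\}$, $\sum_a\delta^t_{a|o}=1$. The set $\mathcal Q^{\mathrm d}(T,\mathcal X_S,\mathcal X_O,\mathcal X_A,\mathfrak p)$ consists of pairs $(\mu,\delta)$, $\delta$ deterministic memoryless, and nonnegative $\mu=((\mu^1_s),(\mu^t_{soa}),(\mu^t_{sas'}))_{t\in[T]}$ satisfying for all $s,s',o,a,t$: (i) $\mu^1_s=p(s)$; (ii) $\sum_{o,a}\mu^t_{soa}=\nu^t_s$, where $\nu^1_s:=\mu^1_s$ and $\nu^t_s:=\sum_{s'',a''}\mu^{t-1}_{s''a''s}$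 for $t\ge2$; (iii) $\sum_{\bar s}\mu^t_{sa\bar s}=\sum_o\mu^t_{soa}$; (iv) $\mu^t_{sas'}=p(s'|s,a)\sum_{\bar s}\mu^t_{sa\bar s}$; (McCormick) $\mu^t_{soa}\le p(o|s)\nu^t_s$, $\mu^t_{soa}\le\delta^t_{a|o}$, $\mu^t_{soa}\ge p(o|s)\nu^t_s+\delta^t_{a|o}-1$. The MILP is $\max\sum_{t}\sum_{s,a,s'}r(s,a,s')\mu^t_{sas'}$ over $\mathcal Q^{\mathrm d}$; its linear relaxation replaces $\delta^t_{a|o}\in\{0,1\}$ by $\delta^t_{a|o}\in[0,1]$ (keeping $\sum_a\delta^t_{a|o}=1$). Valid inequalities (VI): for all $t\in\{2,\dots,T\}$, $s,s'\in\mathcal X_S$, $o\in\mathcal X_O$, $a,a'\in\mathcal X_A$: $\sum_{s',a'}\mu^t_{s'a'soa}=\mu^t_{soa}$; $\sum_a\mu^t_{s'a'soa}=p(o|s)\mu^{t-1}_{s'a's}$; $\mu^t_{s'a'soa}=p(s|s',a',o)\sum_{\bar s}\mu^t_{s'a'\bar soa}$, where $p(s|s',a',o):=\frac{p(o|s)p(s|s',a')}{\sum_{\bar s}p(o|\bar s)p(\bar s|s',a')}$. *)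

theory Defs
  imports Main "HOL-Library.Extended_Real"
begin

text \<open>POMDP data (reward omitted: it does not enter the feasible set).
  S, Obs, A: state/observation/action spaces (finite carrier sets);
  p0 s = p(s); pO s ob = p(ob|s); pT s a s' = p(s'|s,a).\<close>

definition pomdp ::
  "'s set \<Rightarrow> 'ob set \<Rightarrow> 'a set \<Rightarrow> ('s \<Rightarrow> real) \<Rightarrow> ('s \<Rightarrow> 'ob \<Rightarrow> real)
   \<Rightarrow> ('s \<Rightarrow> 'a \<Rightarrow> 's \<Rightarrow> real) \<Rightarrow> bool" where
  "pomdp S Obs A p0 pO pT \<longleftrightarrow>
     finite S \<and> finite Obs \<and> finite A \<and> S \<noteq> {} \<and> Obs \<noteq> {} \<and> A \<noteq> {} \<and>
     (\<forall>s\<in>S. p0 s \<ge> 0) \<and> (\<Sum>s\<in>S. p0 s) = 1 \<and>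
     (\<forall>s\<in>S. \<forall>ob\<in>Obs. pO s ob \<ge> 0) \<and> (\<forall>s\<in>S. (\<Sum>ob\<in>Obs. pO s ob) = 1) \<and>
     (\<forall>s\<in>S. \<forall>a\<in>A. \<forall>s'\<in>S. pT s a s' \<ge> 0) \<and>
     (\<forall>s\<in>S. \<forall>a\<in>A. (\<Sum>s'\<in>S. pT s a s') = 1)"

definition nu ::
  "'s set \<Rightarrow> 'a set \<Rightarrow> ('s \<Rightarrow> real) \<Rightarrow> (nat \<Rightarrow> 's \<Rightarrow> 'a \<Rightarrow> 's \<Rightarrow> real) \<Rightarrow> nat \<Rightarrow> 's \<Rightarrow> real" where
  "nu S A mu1 muSAS t s =
     (if t = 1 then mu1 s else (\<Sum>s''\<in>S. \<Sum>a''\<in>A. muSAS (t - 1) s'' a'' s))"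

definition lin_relax_feasible ::
  "nat \<Rightarrow> 's set \<Rightarrow> 'ob set \<Rightarrow> 'a set \<Rightarrow> ('s \<Rightarrow> real) \<Rightarrow> ('s \<Rightarrow> 'ob \<Rightarrow> real)
   \<Rightarrow> ('s \<Rightarrow> 'a \<Rightarrow> 's \<Rightarrow> real)
   \<Rightarrow> ('s \<Rightarrow> real) \<Rightarrow> (nat \<Rightarrow> 's \<Rightarrow> 'ob \<Rightarrow> 'a \<Rightarrow> real) \<Rightarrow> (nat \<Rightarrow> 's \<Rightarrow> 'a \<Rightarrow> 's \<Rightarrow> real)
   \<Rightarrow> (nat \<Rightarrow> 'ob \<Rightarrow> 'a \<Rightarrow> real) \<Rightarrow> bool" where
  "lin_relax_feasible T S Obs A p0 pO pT mu1 muSOA muSAS delta \<longleftrightarrow>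
     (\<forall>t\<in>{1..T}. \<forall>ob\<in>Obs. (\<forall>a\<in>A. 0 \<le> delta t ob a \<and> delta t ob a \<le> 1) \<and> (\<Sum>a\<in>A. delta t ob a) = 1) \<and>
     (\<forall>s\<in>S. mu1 s \<ge> 0) \<and>
     (\<forall>t\<in>{1..T}. \<forall>s\<in>S. \<forall>ob\<in>Obs. \<forall>a\<in>A. muSOA t s ob a \<ge> 0) \<and>
     (\<forall>t\<in>{1..T}. \<forall>s\<in>S. \<forall>a\<in>A. \<forall>s'\<in>S. muSAS t s a s' \<ge> 0) \<and>
     (\<forall>s\<in>S. mu1 s = p0 s) \<and>
     (\<forall>t\<in>{1..T}. \<forall>s\<in>S. (\<Sum>ob\<in>Obs. \<Sum>a\<in>A. muSOA t s ob a) = nu S A mu1 muSAS t s) \<and>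
     (\<forall>t\<in>{1..T}. \<forall>s\<in>S. \<forall>a\<in>A. (\<Sum>sb\<in>S. muSAS t s a sb) = (\<Sum>ob\<in>Obs. muSOA t s ob a)) \<and>
     (\<forall>t\<in>{1..T}. \<forall>s\<in>S. \<forall>a\<in>A. \<forall>s'\<in>S. muSAS t s a s' = pT s a s' * (\<Sum>sb\<in>S. muSAS t s a sb)) \<and>
     (\<forall>t\<in>{1..T}. \<forall>s\<in>S. \<forall>ob\<in>Obs. \<forall>a\<in>A.
         muSOA t s ob a \<le> pO s ob * nu S A mu1 muSAS t s \<and>
         muSOA t s ob a \<le> delta t ob a \<and>
         muSOA t s ob a \<ge> pO s ob * nu S A mu1 muSAS t s + delta t ob a - 1)"

definition Qd ::
  "nat \<Rightarrow> 's set \<Rightarrow> 'ob set \<Rightarrow> 'a set \<Rightarrow> ('s \<Rightarrow> real) \<Rightarrow> ('s \<Rightarrow> 'ob \<Rightarrow> real)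
   \<Rightarrow> ('s \<Rightarrow> 'a \<Rightarrow> 's \<Rightarrow> real)
   \<Rightarrow> ('s \<Rightarrow> real) \<Rightarrow> (nat \<Rightarrow> 's \<Rightarrow> 'ob \<Rightarrow> 'a \<Rightarrow> real) \<Rightarrow> (nat \<Rightarrow> 's \<Rightarrow> 'a \<Rightarrow> 's \<Rightarrow> real)
   \<Rightarrow> (nat \<Rightarrow> 'ob \<Rightarrow> 'a \<Rightarrow> real) \<Rightarrow> bool" where
  "Qd T S Obs A p0 pO pT mu1 muSOA muSAS delta \<longleftrightarrow>
     lin_relax_feasible T S Obs A p0 pO pT mu1 muSOA muSAS delta \<and>
     (\<forall>t\<in>{1..T}. \<forall>ob\<in>Obs. \<forall>a\<in>A. delta t ob a \<in> {0, 1})"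

text \<open>p(s|s',a',ob) := p(ob|s) p(s|s',a') / sum_sb p(ob|sb) p(sb|s',a')  (with x/0 = 0).\<close>
definition pcond ::
  "'s set \<Rightarrow> ('s \<Rightarrow> 'ob \<Rightarrow> real) \<Rightarrow> ('s \<Rightarrow> 'a \<Rightarrow> 's \<Rightarrow> real) \<Rightarrow> 's \<Rightarrow> 's \<Rightarrow> 'a \<Rightarrow> 'ob \<Rightarrow> real" where
  "pcond S pO pT s s' a' ob = pO s ob * pT s' a' s / (\<Sum>sb\<in>S. pO sb ob * pT s' a' sb)"

text \<open>The valid inequalities (VI) for the extra nonnegative variables
  muVI t s' a' s ob a = mu^t_{s'a'soa}, t in {2..T}.\<close>
definition VI ::
  "nat \<Rightarrow> 's set \<Rightarrow> 'ob set \<Rightarrow> 'a set \<Rightarrow> ('s \<Rightarrow> 'ob \<Rightarrow> real) \<Rightarrow> ('s \<Rightarrow> 'a \<Rightarrow> 's \<Rightarrow> real)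
   \<Rightarrow> (nat \<Rightarrow> 's \<Rightarrow> 'ob \<Rightarrow> 'a \<Rightarrow> real) \<Rightarrow> (nat \<Rightarrow> 's \<Rightarrow> 'a \<Rightarrow> 's \<Rightarrow> real)
   \<Rightarrow> (nat \<Rightarrow> 's \<Rightarrow> 'a \<Rightarrow> 's \<Rightarrow> 'ob \<Rightarrow> 'a \<Rightarrow> real) \<Rightarrow> bool" where
  "VI T S Obs A pO pT muSOA muSAS muVI \<longleftrightarrow>
     (\<forall>t\<in>{2..T}. \<forall>s'\<in>S. \<forall>a'\<in>A. \<forall>s\<in>S. \<forall>ob\<in>Obs. \<forall>a\<in>A. muVI t s' a' s ob a \<ge> 0) \<and>
     (\<forall>t\<in>{2..T}. \<forall>s\<in>S. \<forall>ob\<in>Obs. \<forall>a\<in>A.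
         (\<Sum>s'\<in>S. \<Sum>a'\<in>A. muVI t s' a' s ob a) = muSOA t s ob a) \<and>
     (\<forall>t\<in>{2..T}. \<forall>s'\<in>S. \<forall>a'\<in>A. \<forall>s\<in>S. \<forall>ob\<in>Obs.
         (\<Sum>a\<in>A. muVI t s' a' s ob a) = pO s ob * muSAS (t - 1) s' a' s) \<and>
     (\<forall>t\<in>{2..T}. \<forall>s'\<in>S. \<forall>a'\<in>A. \<forall>s\<in>S. \<forall>ob\<in>Obs. \<forall>a\<in>A.
         muVI t s' a' s ob a = pcond S pO pT s s' a' ob * (\<Sum>sb\<in>S. muVI t s' a' sb ob a))"

end

theory Submission
  imports Defs
begin

text \<open>For a deterministic policy the McCormick envelope is exact, so
  mu^t_soa = delta^t_{a|o} p(o|s) nu^t_s. Splitting nu^t_s along its predecessors gives the lifted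
  variables mu^t_{s'a'soa} = delta^t_{a|o} p(o|s) mu^{t-1}_{s'a's}, and the transition constraint
  makes them obey Bayes' rule in s. A fractional policy instead lets the relaxation correlate the
  action with the hidden state; with a single observation the posterior p(s|s',a',o) is uniform,
  and (VI) then force the state marginal of every action to be uniform as well.\<close>

lemma mccormick_binary_eq:
  fixes x y d :: real
  assumes "d \<in> {0, 1}" "0 \<le> x" "x \<le> y" "x \<le> d" "y + d - 1 \<le> x"
  shows "x = d * y"
  using assms by auto

lemma bayes_rescale:
  fixes q :: "'s \<Rightarrow> real"
  assumes "finite S" "s \<in> S" "\<forall>x\<in>S. 0 \<le> q x"
  shows "q s * M = q s / (\<Sum>x\<in>S. q x) * (\<Sum>x\<in>S. q x * M)"
proof (cases "(\<Sum>x\<in>S. q x) = 0")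
  case True
  then have "q s = 0" using assms by (simp add: sum_nonneg_eq_0_iff)
  then show ?thesis by simp
next
  case False
  then show ?thesis by (simp add: sum_distrib_right[symmetric])
qed

lemma Qd_muSOA_eq:
  assumes "Qd T S Obs A p0 pO pT mu1 muSOA muSAS delta"
    and "t \<in> {1..T}" "s \<in> S" "ob \<in> Obs" "a \<in> A"
  shows "muSOA t s ob a = delta t ob a * (pO s ob * nu S A mu1 muSAS t s)"
  using assms
  by (intro mccormick_binary_eq) (auto simp: Qd_def lin_relax_feasible_def)

lemma lin_relax_feasibleD:
  assumes "lin_relax_feasible T S Obs A p0 pO pT mu1 muSOA muSAS delta" "t \<in> {1..T}"
  shows delta_nonneg: "ob \<in> Obs \<Longrightarrow> a \<in> A \<Longrightarrow> 0 \<le> delta t ob a"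
    and delta_sum: "ob \<in> Obs \<Longrightarrow> (\<Sum>a\<in>A. delta t ob a) = 1"
    and muSAS_nonneg: "s \<in> S \<Longrightarrow> a \<in> A \<Longrightarrow> s' \<in> S \<Longrightarrow> 0 \<le> muSAS t s a s'"
    and muSAS_transition:
      "s \<in> S \<Longrightarrow> a \<in> A \<Longrightarrow> s' \<in> S \<Longrightarrow> muSAS t s a s' = pT s a s' * (\<Sum>sb\<in>S. muSAS t s a sb)"
  using assms unfolding lin_relax_feasible_def by meson+

definition vi_lift ::
  "('s \<Rightarrow> 'ob \<Rightarrow> real) \<Rightarrow> (nat \<Rightarrow> 's \<Rightarrow> 'a \<Rightarrow> 's \<Rightarrow> real) \<Rightarrow> (nat \<Rightarrow> 'ob \<Rightarrow> 'a \<Rightarrow> real)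
   \<Rightarrow> nat \<Rightarrow> 's \<Rightarrow> 'a \<Rightarrow> 's \<Rightarrow> 'ob \<Rightarrow> 'a \<Rightarrow> real" where
  "vi_lift pO muSAS delta t s' a' s ob a = delta t ob a * (pO s ob * muSAS (t - 1) s' a' s)"

lemma Qd_imp_VI_vi_lift:
  assumes P: "pomdp S Obs A p0 pO pT" and Q: "Qd T S Obs A p0 pO pT mu1 muSOA muSAS delta"
  shows "VI T S Obs A pO pT muSOA muSAS (vi_lift pO muSAS delta)"
  unfolding VI_def
proof (intro conjI ballI)
  have L: "lin_relax_feasible T S Obs A p0 pO pT mu1 muSOA muSAS delta"
    using Q by (simp add: Qd_def)
  fix t s' a' s ob a
  assume t: "t \<in> {2..T}"
  then have t1: "t \<in> {1..T}" "t - 1 \<in> {1..T}" by auto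
  {
    assume "s' \<in> S" "a' \<in> A" "s \<in> S" "ob \<in> Obs" "a \<in> A"
    with P lin_relax_feasibleD[OF L t1(1)] lin_relax_feasibleD[OF L t1(2)]
    show "0 \<le> vi_lift pO muSAS delta t s' a' s ob a"
      by (simp add: vi_lift_def pomdp_def)
  next
    assume "s \<in> S" "ob \<in> Obs" "a \<in> A"
    with t have "(\<Sum>s'\<in>S. \<Sum>a'\<in>A. vi_lift pO muSAS delta t s' a' s ob a)
        = delta t ob a * (pO s ob * nu S A mu1 muSAS t s)"
      by (simp add: vi_lift_def nu_def sum_distrib_left)
    also have "\<dots> = muSOA t s ob a"
      using Qd_muSOA_eq[OF Q t1(1) \<open>s \<in> S\<close> \<open>ob \<in> Obs\<close> \<open>a \<in> A\<close>] by simp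
    finally show "(\<Sum>s'\<in>S. \<Sum>a'\<in>A. vi_lift pO muSAS delta t s' a' s ob a) = muSOA t s ob a" .
  next
    assume "ob \<in> Obs"
    then show "(\<Sum>a\<in>A. vi_lift pO muSAS delta t s' a' s ob a) = pO s ob * muSAS (t - 1) s' a' s"
      by (simp add: vi_lift_def sum_distrib_right[symmetric] delta_sum[OF L t1(1)])
  next
    assume h: "s' \<in> S" "a' \<in> A" "s \<in> S" "ob \<in> Obs" "a \<in> A"
    define M where "M = (\<Sum>sb\<in>S. muSAS (t - 1) s' a' sb)"
    have trans: "muSAS (t - 1) s' a' sb = pT s' a' sb * M" if "sb \<in> S" for sb
      unfolding M_def using muSAS_transition[OF L t1(2) h(1,2) that] .
    have lifted: "vi_lift pO muSAS delta t s' a' sb ob a = delta t ob a * (pO sb ob * pT s' a' sb * M)"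
      if "sb \<in> S" for sb
      unfolding vi_lift_def trans[OF that] by (simp only: mult.assoc)
    have "vi_lift pO muSAS delta t s' a' s ob a = delta t ob a * (pO s ob * pT s' a' s * M)"
      using lifted[OF h(3)] .
    also have "\<dots> = delta t ob a * (pcond S pO pT s s' a' ob
                    * (\<Sum>sb\<in>S. pO sb ob * pT s' a' sb * M))"
      unfolding pcond_def using P h
      by (subst bayes_rescale[where S = S]) (auto simp: pomdp_def)
    also have "\<dots> = pcond S pO pT s s' a' ob * (\<Sum>sb\<in>S. delta t ob a * (pO sb ob * pT s' a' sb * M))"
      by (simp add: sum_distrib_left mult_ac)
    also have "\<dots> = pcond S pO pT s s' a' ob * (\<Sum>sb\<in>S. vi_lift pO muSAS delta t s' a' sb ob a)"
      using lifted by simp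
    finally show "vi_lift pO muSAS delta t s' a' s ob a
        = pcond S pO pT s s' a' ob * (\<Sum>sb\<in>S. vi_lift pO muSAS delta t s' a' sb ob a)" .
  }
qed

lemma VI_muSOA_eq_posterior_sum:
  assumes "VI T S Obs A pO pT muSOA muSAS muVI"
    and "t \<in> {2..T}" "s \<in> S" "ob \<in> Obs" "a \<in> A"
  shows "muSOA t s ob a
    = (\<Sum>s'\<in>S. \<Sum>a'\<in>A. pcond S pO pT s s' a' ob * (\<Sum>sb\<in>S. muVI t s' a' sb ob a))"
proof -
  have bayes: "muVI t s' a' s ob a = pcond S pO pT s s' a' ob * (\<Sum>sb\<in>S. muVI t s' a' sb ob a)"
    if "s' \<in> S" "a' \<in> A" for s' a'
    using assms that unfolding VI_def by blast
  have "muSOA t s ob a = (\<Sum>s'\<in>S. \<Sum>a'\<in>A. muVI t s' a' s ob a)"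
    using assms unfolding VI_def by (metis (no_types, lifting))
  also have "\<dots> = (\<Sum>s'\<in>S. \<Sum>a'\<in>A. pcond S pO pT s s' a' ob * (\<Sum>sb\<in>S. muVI t s' a' sb ob a))"
    by (intro sum.cong refl) (blast intro: bayes)
  finally show ?thesis .
qed

definition toy_muSOA :: "nat \<Rightarrow> nat \<Rightarrow> nat \<Rightarrow> nat \<Rightarrow> real" where
  "toy_muSOA t s ob a = (if t = 2 then (if s = a then 1/2 else 0) else 1/4)"

definition toy_muSAS :: "nat \<Rightarrow> nat \<Rightarrow> nat \<Rightarrow> nat \<Rightarrow> real" where
  "toy_muSAS t s a s' = toy_muSOA t s 0 a / 2"

lemma toy_pomdp: "pomdp {0, 1 :: nat} {0 :: nat} {0, 1 :: nat} (\<lambda>_. 1/2) (\<lambda>_ _. 1) (\<lambda>_ _ _. 1/2 :: real)"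
  by (simp add: pomdp_def)

lemma toy_lin_relax_feasible:
  "lin_relax_feasible 2 {0, 1 :: nat} {0 :: nat} {0, 1 :: nat} (\<lambda>_. 1/2) (\<lambda>_ _. 1) (\<lambda>_ _ _. 1/2)
     (\<lambda>_. 1/2) toy_muSOA toy_muSAS (\<lambda>_ _ _. 1/2)"
proof -
  have "{1..2::nat} = {1, 2}" by auto
  then show ?thesis
    by (simp add: lin_relax_feasible_def nu_def toy_muSAS_def toy_muSOA_def)
qed

lemma toy_not_VI:
  "\<not> VI 2 {0, 1 :: nat} {0 :: nat} {0, 1 :: nat} (\<lambda>_ _. 1) (\<lambda>_ _ _. 1/2) toy_muSOA toy_muSAS muVI"
proof
  assume V: "VI 2 {0, 1} {0} {0, 1} (\<lambda>_ _. 1) (\<lambda>_ _ _. 1/2) toy_muSOA toy_muSAS muVI"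
  have uniform_posterior: "pcond {0, 1} (\<lambda>_ _. 1) (\<lambda>_ _ _. 1/2) s s' a' ob = (1/2 :: real)"
    for s s' a' ob :: nat
    by (simp add: pcond_def)
  have "toy_muSOA 2 0 0 0 = toy_muSOA 2 1 0 0"
    using VI_muSOA_eq_posterior_sum[OF V, of 2 0 0 0] VI_muSOA_eq_posterior_sum[OF V, of 2 1 0 0]
    unfolding uniform_posterior by simp
  then show False by (simp add: toy_muSOA_def)
qed

theorem mainTheorem2:
  fixes S :: "'s set" and Obs :: "'ob set" and A :: "'a set"
  shows "(\<forall>(T::nat) p0 pO pT mu1 muSOA muSAS delta.
            pomdp S Obs A p0 pO pT \<and> T \<ge> 1 \<and>
            Qd T S Obs A p0 pO pT mu1 muSOA muSAS delta \<longrightarrow>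
            (\<exists>muVI. VI T S Obs A pO pT muSOA muSAS muVI))
       \<and> (\<exists>(S'::nat set) (Obs'::nat set) (A'::nat set) (T::nat) p0 pO pT mu1 muSOA muSAS delta.
            pomdp S' Obs' A' p0 pO pT \<and> T \<ge> 1 \<and>
            lin_relax_feasible T S' Obs' A' p0 pO pT mu1 muSOA muSAS delta \<and>
            \<not> (\<exists>muVI. VI T S' Obs' A' pO pT muSOA muSAS muVI))"
proof (intro conjI)
  show "\<forall>T p0 pO pT mu1 muSOA muSAS delta. pomdp S Obs A p0 pO pT \<and> T \<ge> 1 \<and>
      Qd T S Obs A p0 pO pT mu1 muSOA muSAS delta \<longrightarrow> (\<exists>muVI. VI T S Obs A pO pT muSOA muSAS muVI)"
    using Qd_imp_VI_vi_lift by blast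
  show "\<exists>(S'::nat set) (Obs'::nat set) (A'::nat set) (T::nat) p0 pO pT mu1 muSOA muSAS delta.
      pomdp S' Obs' A' p0 pO pT \<and> T \<ge> 1 \<and>
      lin_relax_feasible T S' Obs' A' p0 pO pT mu1 muSOA muSAS delta \<and>
      \<not> (\<exists>muVI. VI T S' Obs' A' pO pT muSOA muSAS muVI)"
    using toy_pomdp toy_lin_relax_feasible toy_not_VI one_le_numeral by blast
qed

end
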